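(* Let $0<p_0<1$, $\epsilon>0$, $\omega\ge0$, $\gamma_0\ge\gamma\ge0$, and suppose $p_0\le\frac12-\frac{\gamma_0+\gamma}{2\sqrt{4\epsilon^2+(\gamma_0+\gamma)^2}}$. Let $\omega(t),\epsilon_x(t),\epsilon_y(t),\delta\gamma_t$ be real-valued functions of time with $|\omega(t)|\le\omega$, $\sqrt{\epsilon_x^2(t)+\epsilon_y^2(t)}\le\epsilon$, $|\delta\gamma_t|\le\gamma$, and set $H(t)=[1+\omega(t)]I_z+\epsilon_x(t)I_x+\epsilon_y(t)I_y$, $\gamma_t=\gamma_0+\delta\gamma_t$. Let the qubit density matrix $\rho_t$ evolve according to $$\dot\rho_t=-i[H(t),\rho_t]+\gamma_t\Big(\sigma_-\rho_t\sigma_+-\tfrac12\sigma_+\sigma_-\rho_t-\tfrac12\rho_t\sigma_+\sigma_-\Big)$$ with $\rho_0=|0\rangle\langle0|$. Let $$T_a'=\frac{2p_0}{4\epsilon\sqrt{p_0-p_0^2}+2(\gamma_0+\gamma)(1-p_0)}.$$ Then for every $t\in[0,T_a']$, $\langle0|\rho_t|0\rangle\ge1-p_0$; equivalently, a projective measurement of $\sigma_z$ at time $t$ has probability of failure $\langle1|\rho_t|1\rangle\le p_0$.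
   Context: $\sigma_x,\sigma_y,\sigma_z$ are the Pauli matrices $\begin{pmatrix}0&1\\1&0\end{pmatrix},\begin{pmatrix}0&-i\\i&0\end{pmatrix},\begin{pmatrix}1&0\\0&-1\end{pmatrix}$, $I_j=\frac12\sigma_j$, $\sigma_-=\frac12(\sigma_x-i\sigma_y)$, $\sigma_+=\frac12(\sigma_x+i\sigma_y)$, $[A,B]=AB-BA$. $|0\rangle=(1,0)^T$, $|1\rangle=(0,1)^T$. Units with $\hbar=1$. *)

theory Defs
  imports "HOL-Analysis.Analysis"
begin

text \<open>Qubit operators are 2x2 complex matrices of type complex^2^2; index 1 is the
first basis vector |0>, index 2 the second basis vector |1>.\<close>

type_synonym qmat = "complex^2^2"
type_synonym qvec = "complex^2"

definition mat2 :: "complex \<Rightarrow> complex \<Rightarrow> complex \<Rightarrow> complex \<Rightarrow> qmat" where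
  "mat2 a b c d = vector [vector [a, b], vector [c, d]]"

definition cscale :: "complex \<Rightarrow> qmat \<Rightarrow> qmat" where
  "cscale c A = (\<chi> i j. c * A $ i $ j)"

definition sigma_x :: qmat where "sigma_x = mat2 0 1 1 0"
definition sigma_y :: qmat where "sigma_y = mat2 0 (-\<i>) \<i> 0"
definition sigma_z :: qmat where "sigma_z = mat2 1 0 0 (-1)"

definition I_x :: qmat where "I_x = (1/2) *\<^sub>R sigma_x"
definition I_y :: qmat where "I_y = (1/2) *\<^sub>R sigma_y"
definition I_z :: qmat where "I_z = (1/2) *\<^sub>R sigma_z"

definition sigma_minus :: qmat where "sigma_minus = (1/2) *\<^sub>R (sigma_x - cscale \<i> sigma_y)"
definition sigma_plus :: qmat where "sigma_plus = (1/2) *\<^sub>R (sigma_x + cscale \<i> sigma_y)"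

definition commutator :: "qmat \<Rightarrow> qmat \<Rightarrow> qmat" where
  "commutator A B = A ** B - B ** A"

definition ket0 :: qvec where "ket0 = vector [1, 0]"
definition ket1 :: qvec where "ket1 = vector [0, 1]"

definition outer :: "qvec \<Rightarrow> qvec \<Rightarrow> qmat" where
  "outer u v = (\<chi> i j. u $ i * cnj (v $ j))"

definition braket :: "qvec \<Rightarrow> qmat \<Rightarrow> qvec \<Rightarrow> complex" where
  "braket u A v = (\<Sum>i\<in>UNIV. cnj (u $ i) * (A *v v) $ i)"

definition lindblad :: "qmat \<Rightarrow> real \<Rightarrow> qmat \<Rightarrow> qmat" where
  "lindblad H g \<rho> = cscale (-\<i>) (commutator H \<rho>)
     + g *\<^sub>R (sigma_minus ** \<rho> ** sigma_plus
               - (1/2) *\<^sub>R (sigma_plus ** sigma_minus ** \<rho>)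
               - (1/2) *\<^sub>R (\<rho> ** sigma_plus ** sigma_minus))"

end

theory Submission
  imports Defs
begin

text \<open>The statement does not assume that \<open>\<rho>\<close> is a density matrix, so the proof first recovers
this from the master equation: the trace is conserved; the anti-Hermitian part of \<open>\<rho>\<close> is rotated
by the Hamiltonian and damped by the dissipator, so it stays zero; and \<open>\<Delta> = det \<rho>\<close> satisfies
\<open>\<Delta>' = \<gamma>\<^sub>t (\<rho>\<^sub>0\<^sub>0\<^sup>2 - \<Delta>)\<close>, so it cannot become negative. Hence the excited population
\<open>P = \<langle>1|\<rho>|1\<rangle>\<close> satisfies \<open>|\<rho>\<^sub>0\<^sub>1|\<^sup>2 \<le> P (1 - P)\<close>, and the master equation gives
\<open>P' = \<epsilon>\<^sub>x Im \<rho>\<^sub>0\<^sub>1 + \<epsilon>\<^sub>y Re \<rho>\<^sub>0\<^sub>1 + \<gamma>\<^sub>t (1 - P) \<le> \<epsilon> sqrt (P (1 - P)) + \<gamma>\<^sub>t (1 - P)\<close>.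
While \<open>P \<le> p\<^sub>0 \<le> 1/2\<close> this is at most \<open>R = 2 \<epsilon> sqrt (p\<^sub>0 - p\<^sub>0\<^sup>2) + (\<gamma>\<^sub>0 + \<gamma>) (1 - p\<^sub>0)\<close>,
because the hypothesis on \<open>p\<^sub>0\<close> amounts to \<open>(\<gamma>\<^sub>0 + \<gamma>) p\<^sub>0 \<le> \<epsilon> sqrt (p\<^sub>0 - p\<^sub>0\<^sup>2)\<close>.
A first-exit argument then gives \<open>P t \<le> R t \<le> p\<^sub>0\<close> for \<open>t \<le> p\<^sub>0 / R = T\<^sub>a'\<close>.\<close>

lemma mat2_nth [simp]:
  "mat2 a b c d $ 1 $ 1 = a" "mat2 a b c d $ 1 $ 2 = b"
  "mat2 a b c d $ 2 $ 1 = c" "mat2 a b c d $ 2 $ 2 = d"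
  by (simp_all add: mat2_def)

lemma mat2_cases: obtains a b c d where "A = mat2 a b c d"
proof
  show "A = mat2 (A$1$1) (A$1$2) (A$2$1) (A$2$2)"
    by (simp add: vec_eq_iff forall_2)
qed

lemma mat2_mult [simp]:
  "mat2 a b c d ** mat2 a' b' c' d' = mat2 (a*a' + b*c') (a*b' + b*d') (c*a' + d*c') (c*b' + d*d')"
  by (simp add: vec_eq_iff forall_2 matrix_matrix_mult_def UNIV_2)

lemma mat2_add [simp]: "mat2 a b c d + mat2 a' b' c' d' = mat2 (a+a') (b+b') (c+c') (d+d')"
  and mat2_diff [simp]: "mat2 a b c d - mat2 a' b' c' d' = mat2 (a-a') (b-b') (c-c') (d-d')"
  and mat2_scaleR [simp]: "x *\<^sub>R mat2 a b c d = mat2 (x *\<^sub>R a) (x *\<^sub>R b) (x *\<^sub>R c) (x *\<^sub>R d)"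
  and cscale_mat2 [simp]: "cscale z (mat2 a b c d) = mat2 (z*a) (z*b) (z*c) (z*d)"
  by (simp_all add: vec_eq_iff forall_2 cscale_def)

lemma sigma_minus_eq: "sigma_minus = mat2 0 0 1 0"
  and sigma_plus_eq: "sigma_plus = mat2 0 1 0 0"
  by (simp_all add: sigma_minus_def sigma_plus_def sigma_x_def sigma_y_def)
     (simp_all add: scaleR_conv_of_real)

lemma ket_diag_eq: "braket ket0 A ket0 = A $ 1 $ 1" "braket ket1 A ket1 = A $ 2 $ 2"
  by (simp_all add: braket_def ket0_def ket1_def matrix_vector_mult_def UNIV_2)

lemma outer_ket0_ket0: "outer ket0 ket0 = mat2 1 0 0 0"
  by (simp add: outer_def ket0_def vec_eq_iff forall_2)

lemma lindblad_nth:
  fixes W ex ey g :: real and r :: qmat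
  defines "L \<equiv> lindblad (W *\<^sub>R I_z + ex *\<^sub>R I_x + ey *\<^sub>R I_y) g r"
  shows "L $ 1 $ 1 = - \<i> * ((ex - \<i>*ey)/2 * r$2$1 - r$1$2 * (ex + \<i>*ey)/2) - g * r$1$1"
    and "L $ 1 $ 2 = - \<i> * (W * r$1$2 + (ex - \<i>*ey)/2 * (r$2$2 - r$1$1)) - g * r$1$2 / 2"
    and "L $ 2 $ 1 = - \<i> * ((ex + \<i>*ey)/2 * (r$1$1 - r$2$2) - W * r$2$1) - g * r$2$1 / 2"
    and "L $ 2 $ 2 = - \<i> * ((ex + \<i>*ey)/2 * r$1$2 - r$2$1 * (ex - \<i>*ey)/2) + g * r$1$1"
proof -
  obtain a b c d where r: "r = mat2 a b c d" by (rule mat2_cases)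
  show "L $ 1 $ 1 = - \<i> * ((ex - \<i>*ey)/2 * r$2$1 - r$1$2 * (ex + \<i>*ey)/2) - g * r$1$1"
    and "L $ 1 $ 2 = - \<i> * (W * r$1$2 + (ex - \<i>*ey)/2 * (r$2$2 - r$1$1)) - g * r$1$2 / 2"
    and "L $ 2 $ 1 = - \<i> * ((ex + \<i>*ey)/2 * (r$1$1 - r$2$2) - W * r$2$1) - g * r$2$1 / 2"
    and "L $ 2 $ 2 = - \<i> * ((ex + \<i>*ey)/2 * r$1$2 - r$2$1 * (ex - \<i>*ey)/2) + g * r$1$1"
    unfolding L_def lindblad_def commutator_def sigma_minus_eq sigma_plus_eq r
      I_x_def I_y_def I_z_def sigma_x_def sigma_y_def sigma_z_def
    by simp_all (simp_all add: scaleR_conv_of_real field_simps)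
qed

lemma lindblad_Re_Im:
  fixes W ex ey g :: real and r :: qmat
  defines "L \<equiv> lindblad (W *\<^sub>R I_z + ex *\<^sub>R I_x + ey *\<^sub>R I_y) g r"
  shows "Re (L$1$1) = (ex * (Im (r$2$1) - Im (r$1$2)) - ey * (Re (r$2$1) + Re (r$1$2))) / 2 - g * Re (r$1$1)"
    and "Im (L$1$1) = (ex * (Re (r$1$2) - Re (r$2$1)) - ey * (Im (r$1$2) + Im (r$2$1))) / 2 - g * Im (r$1$1)"
    and "Re (L$2$2) = - (ex * (Im (r$2$1) - Im (r$1$2)) - ey * (Re (r$2$1) + Re (r$1$2))) / 2 + g * Re (r$1$1)"
    and "Re (L$1$2) = W * Im (r$1$2) + (ex * (Im (r$2$2) - Im (r$1$1)) - ey * (Re (r$2$2) - Re (r$1$1))) / 2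
                      - g * Re (r$1$2) / 2"
    and "Im (L$1$2) = - W * Re (r$1$2) - (ex * (Re (r$2$2) - Re (r$1$1)) + ey * (Im (r$2$2) - Im (r$1$1))) / 2
                      - g * Im (r$1$2) / 2"
    and "Re (L$2$1) = - W * Im (r$2$1) - (ex * (Im (r$2$2) - Im (r$1$1)) + ey * (Re (r$2$2) - Re (r$1$1))) / 2
                      - g * Re (r$2$1) / 2"
    and "Im (L$2$1) = W * Re (r$2$1) + (ex * (Re (r$2$2) - Re (r$1$1)) - ey * (Im (r$2$2) - Im (r$1$1))) / 2
                      - g * Im (r$2$1) / 2"
  unfolding L_def lindblad_nth by (simp_all add: field_simps)

lemma has_vector_derivative_entry:
  fixes \<rho> :: "real \<Rightarrow> complex^'n^'m"
  assumes "(\<rho> has_vector_derivative D) F"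
  shows "((\<lambda>t. \<rho> t $ i $ j) has_vector_derivative D $ i $ j) F"
  using bounded_linear.has_vector_derivative
      [OF bounded_linear_compose[OF bounded_linear_vec_nth bounded_linear_vec_nth] assms]
  by simp

lemma has_real_derivative_Re_entry:
  fixes \<rho> :: "real \<Rightarrow> complex^'n^'m"
  assumes "(\<rho> has_vector_derivative D) F"
  shows "((\<lambda>t. Re (\<rho> t $ i $ j)) has_real_derivative Re (D $ i $ j)) F"
  using bounded_linear.has_vector_derivative[OF bounded_linear_Re has_vector_derivative_entry[OF assms]]
  by (simp add: has_real_derivative_iff_has_vector_derivative)

lemma has_real_derivative_Im_entry:
  fixes \<rho> :: "real \<Rightarrow> complex^'n^'m"
  assumes "(\<rho> has_vector_derivative D) F"
  shows "((\<lambda>t. Im (\<rho> t $ i $ j)) has_real_derivative Im (D $ i $ j)) F"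
  using bounded_linear.has_vector_derivative[OF bounded_linear_Im has_vector_derivative_entry[OF assms]]
  by (simp add: has_real_derivative_iff_has_vector_derivative)

lemma DERIV_at_if_within_atLeast:
  fixes a t :: real
  assumes "a < t" and "(f has_field_derivative D) (at t within {a..})"
  shows "(f has_field_derivative D) (at t)"
proof -
  have "at t within {a..} = at t" using \<open>a < t\<close> by (intro at_within_interior) simp
  then show ?thesis using assms(2) by simp
qed

lemma nonneg_if_deriv_nonneg_where_neg:
  fixes f f' :: "real \<Rightarrow> real"
  assumes deriv: "\<And>t. a \<le> t \<Longrightarrow> (f has_real_derivative f' t) (at t within {a..})"
    and start: "0 \<le> f a"
    and push: "\<And>t. a < t \<Longrightarrow> t < b \<Longrightarrow> f t < 0 \<Longrightarrow> 0 \<le> f' t"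
    and "a \<le> b"
  shows "0 \<le> f b"
proof (rule ccontr)
  assume neg_b: "\<not> 0 \<le> f b"
  have cont: "continuous_on {a..b} f"
    by (rule DERIV_continuous_on, rule DERIV_subset[OF deriv]) auto
  let ?S = "{s \<in> {a..b}. 0 \<le> f s}"
  have "closed ?S"
    using continuous_closed_preimage[OF cont closed_atLeastAtMost, of "{0..}"]
    by (simp add: vimage_def Int_def conj_commute)
  moreover have "bounded ?S" by (rule bounded_subset[of "{a..b}"]) auto
  ultimately have "compact ?S" by (simp add: compact_eq_bounded_closed)
  moreover have "a \<in> ?S" using start \<open>a \<le> b\<close> by auto
  ultimately have "\<exists>t0\<in>?S. \<forall>s\<in>?S. s \<le> t0"
    by (intro compact_attains_sup) auto
  then obtain t0 where t0: "t0 \<in> ?S" and last: "\<forall>s\<in>?S. s \<le> t0" ..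
  have "t0 < b" using t0 neg_b by (cases "t0 = b") auto
  have "f t0 \<le> f b"
  proof (rule DERIV_nonneg_imp_increasing_open[OF less_imp_le[OF \<open>t0 < b\<close>]])
    fix t assume t: "t0 < t" "t < b"
    have "(f has_real_derivative f' t) (at t)"
      by (rule DERIV_at_if_within_atLeast[OF _ deriv]) (use t t0 in auto)
    moreover have "f t < 0"
    proof (rule ccontr)
      assume "\<not> f t < 0"
      then have "t \<in> ?S" using t t0 by auto
      then show False using last t by auto
    qed
    ultimately show "\<exists>y. DERIV f t :> y \<and> 0 \<le> y"
      using push[of t] t t0 by auto
  next
    show "continuous_on {t0..b} f"
      by (rule continuous_on_subset[OF cont]) (use t0 in auto)
  qed
  then show False using t0 neg_b by auto
qed

lemma pos_if_deriv_nonneg_while_pos: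
  fixes f f' :: "real \<Rightarrow> real"
  assumes deriv: "\<And>t. a \<le> t \<Longrightarrow> (f has_real_derivative f' t) (at t within {a..})"
    and start: "0 < f a"
    and push: "\<And>t. a < t \<Longrightarrow> t < b \<Longrightarrow> (\<forall>s\<in>{a..t}. 0 < f s) \<Longrightarrow> 0 \<le> f' t"
    and "a \<le> b"
  shows "0 < f b"
proof (rule ccontr)
  assume nonpos_b: "\<not> 0 < f b"
  have cont: "continuous_on {a..b} f"
    by (rule DERIV_continuous_on, rule DERIV_subset[OF deriv]) auto
  let ?S = "{s \<in> {a..b}. f s \<le> 0}"
  have "closed ?S"
    using continuous_closed_preimage[OF cont closed_atLeastAtMost, of "{..0}"]
    by (simp add: vimage_def Int_def conj_commute)
  moreover have "bounded ?S" by (rule bounded_subset[of "{a..b}"]) auto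
  ultimately have "compact ?S" by (simp add: compact_eq_bounded_closed)
  moreover have "b \<in> ?S" using nonpos_b \<open>a \<le> b\<close> by auto
  ultimately have "\<exists>t0\<in>?S. \<forall>s\<in>?S. t0 \<le> s"
    by (intro compact_attains_inf) auto
  then obtain t0 where t0: "t0 \<in> ?S" and first: "\<forall>s\<in>?S. t0 \<le> s" ..
  have "a < t0" using t0 start by (cases "t0 = a") auto
  have "f a \<le> f t0"
  proof (rule DERIV_nonneg_imp_increasing_open[OF less_imp_le[OF \<open>a < t0\<close>]])
    fix t assume t: "a < t" "t < t0"
    have "(f has_real_derivative f' t) (at t)"
      by (rule DERIV_at_if_within_atLeast[OF _ deriv]) (use t in auto)
    moreover have "\<forall>s\<in>{a..t}. 0 < f s"
    proof
      fix s assume s: "s \<in> {a..t}"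
      show "0 < f s"
      proof (rule ccontr)
        assume "\<not> 0 < f s"
        then have "s \<in> ?S" using s t t0 by auto
        then show False using first s t by auto
      qed
    qed
    ultimately show "\<exists>y. DERIV f t :> y \<and> 0 \<le> y"
      using push[of t] t t0 by auto
  next
    show "continuous_on {a..t0} f"
      by (rule continuous_on_subset[OF cont]) (use t0 in auto)
  qed
  then show False using t0 start by auto
qed

lemma lt_level_before_time_if_rate_le:
  fixes P P' :: "real \<Rightarrow> real"
  assumes deriv: "\<And>s. 0 \<le> s \<Longrightarrow> (P has_real_derivative P' s) (at s within {0..})"
    and "P 0 \<le> 0" "0 < R"
    and rate: "\<And>s. 0 \<le> s \<Longrightarrow> P s \<le> p \<Longrightarrow> P' s \<le> R"
    and "0 \<le> t" "t < p / R"
  shows "P t < p"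
proof -
  \<comment> \<open>the slack \<open>R (p / R - t)\<close> keeps \<open>P\<close> strictly below \<open>p\<close>, where the rate bound applies\<close>
  define f where "f u = R * (u + p / R - t) - P u" for u
  have "0 < f t"
  proof (rule pos_if_deriv_nonneg_while_pos[where f = f])
    show "(f has_real_derivative R - P' u) (at u within {0..})" if "0 \<le> u" for u
      unfolding f_def using deriv[OF that] by (auto intro!: derivative_eq_intros)
    have "R * (0 + p / R - t) = p - R * t" using \<open>0 < R\<close> by (simp add: field_simps)
    moreover have "R * t < p" using \<open>t < p / R\<close> \<open>0 < R\<close> by (simp add: field_simps)
    ultimately show "0 < f 0" using \<open>P 0 \<le> 0\<close> by (simp add: f_def)
    show "0 \<le> R - P' u" if "0 < u" "u < t" "\<forall>v\<in>{0..u}. 0 < f v" for u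
    proof -
      have "P u < R * (u + p / R - t)" using that(3) \<open>0 < u\<close> by (simp add: f_def)
      also have "\<dots> \<le> p" using \<open>u < t\<close> \<open>0 < R\<close> by (simp add: field_simps)
      finally show ?thesis using rate[of u] \<open>0 < u\<close> by simp
    qed
  qed (fact \<open>0 \<le> t\<close>)
  then show ?thesis using \<open>0 < R\<close> by (simp add: f_def)
qed

lemma le_level_before_time_if_rate_le:
  fixes P P' :: "real \<Rightarrow> real"
  assumes deriv: "\<And>s. 0 \<le> s \<Longrightarrow> (P has_real_derivative P' s) (at s within {0..})"
    and "P 0 \<le> 0" "0 < p" "0 < R"
    and rate: "\<And>s. 0 \<le> s \<Longrightarrow> P s \<le> p \<Longrightarrow> P' s \<le> R"
    and "0 \<le> t" "t \<le> p / R"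
  shows "P t \<le> p"
proof (cases "t < p / R")
  case True
  then show ?thesis
    using lt_level_before_time_if_rate_le[where p = p, OF deriv \<open>P 0 \<le> 0\<close> \<open>0 < R\<close> rate \<open>0 \<le> t\<close>] by simp
next
  case False
  then have "t = p / R" using \<open>t \<le> p / R\<close> by simp
  have "0 < p / R" using \<open>0 < R\<close> \<open>0 < p\<close> by simp
  have "P (p / R) \<le> p"
  proof (rule continuous_le_on_closure[where S = "{0..<p / R}" and f = P])
    show "continuous_on (closure {0..<p / R}) P"
      using \<open>0 < p / R\<close> by simp (rule DERIV_continuous_on, rule DERIV_subset[OF deriv], auto)
    show "p / R \<in> closure {0..<p / R}" using \<open>0 < p / R\<close> by simp
    show "P s \<le> p" if "s \<in> {0..<p / R}" for s
      using lt_level_before_time_if_rate_le[where p = p, OF deriv \<open>P 0 \<le> 0\<close> \<open>0 < R\<close> rate, of s] that by simp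
  qed
  then show ?thesis using \<open>t = p / R\<close> by simp
qed

lemma threshold_bounds:
  fixes p \<epsilon> G :: real
  assumes "0 < p" "p < 1" "0 < \<epsilon>" "0 \<le> G"
    and threshold: "p \<le> 1/2 - G / (2 * sqrt (4 * \<epsilon>\<^sup>2 + G\<^sup>2))"
  shows "p \<le> 1/2" and "G * p \<le> \<epsilon> * sqrt (p - p\<^sup>2)"
proof -
  define S where "S = sqrt (4 * \<epsilon>\<^sup>2 + G\<^sup>2)"
  have "0 < S" using \<open>0 < \<epsilon>\<close> by (simp add: S_def add_pos_nonneg)
  have G_le: "G \<le> (1 - 2 * p) * S"
    using threshold \<open>0 < S\<close> by (simp add: S_def field_simps)
  then have "0 \<le> (1 - 2 * p) * S" using \<open>0 \<le> G\<close> by linarith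
  then show "p \<le> 1/2" using \<open>0 < S\<close> by (simp add: zero_le_mult_iff)
  then have "G\<^sup>2 \<le> (1 - 2 * p)\<^sup>2 * (4 * \<epsilon>\<^sup>2 + G\<^sup>2)"
    using power_mono[OF G_le \<open>0 \<le> G\<close>, of 2] by (simp add: S_def power_mult_distrib)
  moreover have "(1 - 2 * p)\<^sup>2 * (4 * \<epsilon>\<^sup>2 + G\<^sup>2) - G\<^sup>2 = 4 * (\<epsilon>\<^sup>2 * (1 - 2 * p)\<^sup>2 - G\<^sup>2 * p * (1 - p))"
    by (simp add: algebra_simps power2_eq_square)
  moreover have "\<epsilon>\<^sup>2 * (1 - 2 * p)\<^sup>2 \<le> \<epsilon>\<^sup>2 * (1 - p)\<^sup>2"
    using \<open>p \<le> 1/2\<close> \<open>0 < p\<close> by (intro mult_left_mono power_mono) simp_all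
  ultimately have "(G\<^sup>2 * p) * (1 - p) \<le> (\<epsilon>\<^sup>2 * (1 - p)) * (1 - p)"
    by (simp add: power2_eq_square algebra_simps)
  then have "G\<^sup>2 * p \<le> \<epsilon>\<^sup>2 * (1 - p)"
    using \<open>p < 1\<close> by simp
  then have "(G * p)\<^sup>2 \<le> (\<epsilon> * sqrt (p - p\<^sup>2))\<^sup>2"
    using \<open>0 < p\<close> \<open>p < 1\<close> mult_left_mono[of "G\<^sup>2 * p" "\<epsilon>\<^sup>2 * (1 - p)" p]
    by (simp add: power_mult_distrib power2_eq_square algebra_simps)
  moreover have "0 \<le> p - p\<^sup>2"
    using \<open>0 < p\<close> \<open>p < 1\<close> mult_nonneg_nonneg[of p "1 - p"] by (simp add: power2_eq_square algebra_simps)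
  ultimately show "G * p \<le> \<epsilon> * sqrt (p - p\<^sup>2)"
    using \<open>0 < \<epsilon>\<close> by (intro power2_le_imp_le[of "G * p"]) simp_all
qed

lemma excitation_rate_le:
  fixes ex ey x y g P \<epsilon> G p :: real
  assumes drive: "ex\<^sup>2 + ey\<^sup>2 \<le> \<epsilon>\<^sup>2" and coherence: "x\<^sup>2 + y\<^sup>2 \<le> (1 - P) * P"
    and "0 \<le> P" "P \<le> p" "p \<le> 1/2" "0 \<le> \<epsilon>" "0 \<le> g" "g \<le> G"
    and G_p: "G * p \<le> \<epsilon> * sqrt (p - p\<^sup>2)"
  shows "ex * y + ey * x + g * (1 - P) \<le> 2 * \<epsilon> * sqrt (p - p\<^sup>2) + G * (1 - p)"
proof -
  have "(1 - P) * P - (p - p\<^sup>2) = (p - P) * (p + P - 1)"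
    by (simp add: algebra_simps power2_eq_square)
  also have "\<dots> \<le> 0"
    using \<open>P \<le> p\<close> \<open>p \<le> 1/2\<close> \<open>0 \<le> P\<close> by (intro mult_nonneg_nonpos) auto
  finally have "x\<^sup>2 + y\<^sup>2 \<le> p - p\<^sup>2" using coherence by linarith
  then have "0 \<le> p - p\<^sup>2" using zero_le_power2[of x] zero_le_power2[of y] by linarith
  have "(ex * y + ey * x)\<^sup>2 \<le> (ex * y + ey * x)\<^sup>2 + (ex * x - ey * y)\<^sup>2"
    by simp
  also have "\<dots> = (ex\<^sup>2 + ey\<^sup>2) * (x\<^sup>2 + y\<^sup>2)"
    by (simp add: algebra_simps power2_eq_square)
  also have "\<dots> \<le> \<epsilon>\<^sup>2 * (p - p\<^sup>2)"
    using drive \<open>x\<^sup>2 + y\<^sup>2 \<le> p - p\<^sup>2\<close> by (intro mult_mono) simp_all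
  also have "\<dots> = (\<epsilon> * sqrt (p - p\<^sup>2))\<^sup>2"
    using \<open>0 \<le> p - p\<^sup>2\<close> by (simp add: power_mult_distrib)
  finally have "ex * y + ey * x \<le> \<epsilon> * sqrt (p - p\<^sup>2)"
    using \<open>0 \<le> \<epsilon>\<close> \<open>0 \<le> p - p\<^sup>2\<close> by (intro power2_le_imp_le[of "ex * y + ey * x"]) simp_all
  moreover have "g * (1 - P) \<le> G"
    using mult_left_le[of "1 - P" g] \<open>0 \<le> g\<close> \<open>0 \<le> P\<close> \<open>g \<le> G\<close> by linarith
  ultimately show ?thesis using G_p by (simp add: algebra_simps)
qed

locale driven_decaying_qubit =
  fixes W ex ey g :: "real \<Rightarrow> real" and \<rho> :: "real \<Rightarrow> qmat"
  assumes rho_deriv: "\<And>t. 0 \<le> t \<Longrightarrow> (\<rho> has_vector_derivative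
             lindblad (W t *\<^sub>R I_z + ex t *\<^sub>R I_x + ey t *\<^sub>R I_y) (g t) (\<rho> t)) (at t within {0..})"
    and decay_rate_nonneg: "\<And>t. 0 \<le> t \<Longrightarrow> 0 \<le> g t"
    and rho_0: "\<rho> 0 = outer ket0 ket0"
begin

abbreviation rho_dot :: "real \<Rightarrow> qmat" where
  "rho_dot t \<equiv> lindblad (W t *\<^sub>R I_z + ex t *\<^sub>R I_x + ey t *\<^sub>R I_y) (g t) (\<rho> t)"

lemma rho_0_entries:
  "\<rho> 0 $ 1 $ 1 = 1" "\<rho> 0 $ 1 $ 2 = 0" "\<rho> 0 $ 2 $ 1 = 0" "\<rho> 0 $ 2 $ 2 = 0"
  by (simp_all add: rho_0 outer_ket0_ket0)

lemma has_real_derivative_Re_rho: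
  "0 \<le> t \<Longrightarrow> ((\<lambda>s. Re (\<rho> s $ i $ j)) has_real_derivative Re (rho_dot t $ i $ j)) (at t within {0..})"
  by (rule has_real_derivative_Re_entry[OF rho_deriv])

lemma has_real_derivative_Im_rho:
  "0 \<le> t \<Longrightarrow> ((\<lambda>s. Im (\<rho> s $ i $ j)) has_real_derivative Im (rho_dot t $ i $ j)) (at t within {0..})"
  by (rule has_real_derivative_Im_entry[OF rho_deriv])

lemma trace_rho: "0 \<le> t \<Longrightarrow> \<rho> t $ 1 $ 1 + \<rho> t $ 2 $ 2 = 1"
proof -
  have "((\<lambda>s. \<rho> s $ 1 $ 1 + \<rho> s $ 2 $ 2) has_derivative (\<lambda>h. 0)) (at s within {0..})"
    if "s \<in> {0..}" for s
  proof -
    have "rho_dot s $ 1 $ 1 + rho_dot s $ 2 $ 2 = 0"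
      unfolding lindblad_nth by (simp add: algebra_simps)
    then show ?thesis
      using has_vector_derivative_add[OF has_vector_derivative_entry[OF rho_deriv, of s 1 1]
          has_vector_derivative_entry[OF rho_deriv, of s 2 2]] that
      by (simp add: has_vector_derivative_def)
  qed
  moreover assume "0 \<le> t"
  ultimately have "\<rho> 0 $ 1 $ 1 + \<rho> 0 $ 2 $ 2 = \<rho> t $ 1 $ 1 + \<rho> t $ 2 $ 2"
    by (intro has_derivative_zero_unique[of "{0..}" "\<lambda>s. \<rho> s $ 1 $ 1 + \<rho> s $ 2 $ 2"]) auto
  then show ?thesis by (simp add: rho_0_entries)
qed

lemma rho_hermitian:
  assumes "0 \<le> t"
  shows "Im (\<rho> t $ 1 $ 1) = 0" and "\<rho> t $ 2 $ 1 = cnj (\<rho> t $ 1 $ 2)"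
proof -
  define a where "a = (\<lambda>s. Im (\<rho> s $ 1 $ 1))"
  define X where "X = (\<lambda>s. Re (\<rho> s $ 1 $ 2) - Re (\<rho> s $ 2 $ 1))"
  define Y where "Y = (\<lambda>s. Im (\<rho> s $ 1 $ 2) + Im (\<rho> s $ 2 $ 1))"
  \<comment> \<open>\<open>a\<close>, \<open>X\<close>, \<open>Y\<close> span the anti-Hermitian part of \<open>\<rho>\<close>: the Hamiltonian rotates them
    and the dissipator damps them, so the weighted norm \<open>N\<close> cannot grow\<close>
  define N where "N s = 4 * (a s)\<^sup>2 + (X s)\<^sup>2 + (Y s)\<^sup>2" for s
  have "((\<lambda>s. - N s) has_real_derivative g s * (4 * (a s)\<^sup>2 + N s)) (at s within {0..})"
    if "0 \<le> s" for s
  proof -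
    note Re_deriv = has_real_derivative_Re_rho[OF that] and Im_deriv = has_real_derivative_Im_rho[OF that]
    have Im_22: "Im (\<rho> s $ 2 $ 2) = - a s"
      using arg_cong[OF trace_rho[OF that], of Im] by (simp add: a_def)
    have "(a has_real_derivative (ex s * X s - ey s * Y s) / 2 - g s * a s) (at s within {0..})"
      using Im_deriv[of 1 1] by (simp add: a_def X_def Y_def lindblad_Re_Im)
    moreover have "(X has_real_derivative W s * Y s - 2 * ex s * a s - g s * X s / 2) (at s within {0..})"
      unfolding X_def
      by (rule DERIV_cong[OF DERIV_diff[OF Re_deriv Re_deriv]])
         (simp only: lindblad_Re_Im, simp add: Im_22 a_def Y_def field_simps)
    moreover have "(Y has_real_derivative - W s * X s + 2 * ey s * a s - g s * Y s / 2) (at s within {0..})"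
      unfolding Y_def
      by (rule DERIV_cong[OF DERIV_add[OF Im_deriv Im_deriv]])
         (simp only: lindblad_Re_Im, simp add: Im_22 a_def X_def field_simps)
    ultimately show ?thesis
      unfolding N_def
      by (rule DERIV_cong[OF DERIV_minus[OF DERIV_add[OF DERIV_add[OF DERIV_cmult[OF DERIV_power]
              DERIV_power] DERIV_power]]])
         (simp add: field_simps power2_eq_square)
  qed
  then have "0 \<le> - N t"
  proof (rule nonneg_if_deriv_nonneg_where_neg)
    show "0 \<le> - N 0" by (simp add: N_def a_def X_def Y_def rho_0_entries)
    show "0 \<le> g s * (4 * (a s)\<^sup>2 + N s)" if "0 < s" for s
      using decay_rate_nonneg[of s] that by (simp add: N_def)
  qed (use assms in auto)
  then have "(a t)\<^sup>2 = 0 \<and> (X t)\<^sup>2 = 0 \<and> (Y t)\<^sup>2 = 0"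
    unfolding N_def using zero_le_power2[of "a t"] zero_le_power2[of "X t"] zero_le_power2[of "Y t"]
    by linarith
  then have "a t = 0" "X t = 0" "Y t = 0" by simp_all
  then show "Im (\<rho> t $ 1 $ 1) = 0" and "\<rho> t $ 2 $ 1 = cnj (\<rho> t $ 1 $ 2)"
    by (simp_all add: a_def X_def Y_def complex_eq_iff)
qed

lemma bloch_equations:
  assumes "0 \<le> t"
  shows "((\<lambda>s. Re (\<rho> s $ 1 $ 1)) has_real_derivative
           - ex t * Im (\<rho> t $ 1 $ 2) - ey t * Re (\<rho> t $ 1 $ 2) - g t * Re (\<rho> t $ 1 $ 1))
         (at t within {0..})"
    and "((\<lambda>s. Re (\<rho> s $ 1 $ 2)) has_real_derivative
           W t * Im (\<rho> t $ 1 $ 2) - ey t * (1 - 2 * Re (\<rho> t $ 1 $ 1)) / 2 - g t * Re (\<rho> t $ 1 $ 2) / 2)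
         (at t within {0..})"
    and "((\<lambda>s. Im (\<rho> s $ 1 $ 2)) has_real_derivative
           - W t * Re (\<rho> t $ 1 $ 2) - ex t * (1 - 2 * Re (\<rho> t $ 1 $ 1)) / 2 - g t * Im (\<rho> t $ 1 $ 2) / 2)
         (at t within {0..})"
proof -
  have "\<rho> t $ 2 $ 2 = 1 - \<rho> t $ 1 $ 1" using trace_rho[OF assms] by (simp add: algebra_simps)
  then have entries: "Re (\<rho> t $ 2 $ 2) = 1 - Re (\<rho> t $ 1 $ 1)" "Im (\<rho> t $ 2 $ 2) = 0"
    "Im (\<rho> t $ 1 $ 1) = 0"
    "Re (\<rho> t $ 2 $ 1) = Re (\<rho> t $ 1 $ 2)" "Im (\<rho> t $ 2 $ 1) = - Im (\<rho> t $ 1 $ 2)"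
    using rho_hermitian[OF assms] by simp_all
  show "((\<lambda>s. Re (\<rho> s $ 1 $ 1)) has_real_derivative
           - ex t * Im (\<rho> t $ 1 $ 2) - ey t * Re (\<rho> t $ 1 $ 2) - g t * Re (\<rho> t $ 1 $ 1))
         (at t within {0..})"
    by (rule DERIV_cong[OF has_real_derivative_Re_rho[OF assms]])
       (simp only: lindblad_Re_Im, simp add: entries field_simps)
  show "((\<lambda>s. Re (\<rho> s $ 1 $ 2)) has_real_derivative
           W t * Im (\<rho> t $ 1 $ 2) - ey t * (1 - 2 * Re (\<rho> t $ 1 $ 1)) / 2 - g t * Re (\<rho> t $ 1 $ 2) / 2)
         (at t within {0..})"
    by (rule DERIV_cong[OF has_real_derivative_Re_rho[OF assms]])
       (simp only: lindblad_Re_Im, simp add: entries field_simps)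
  show "((\<lambda>s. Im (\<rho> s $ 1 $ 2)) has_real_derivative
           - W t * Re (\<rho> t $ 1 $ 2) - ex t * (1 - 2 * Re (\<rho> t $ 1 $ 1)) / 2 - g t * Im (\<rho> t $ 1 $ 2) / 2)
         (at t within {0..})"
    by (rule DERIV_cong[OF has_real_derivative_Im_rho[OF assms]])
       (simp only: lindblad_Re_Im, simp add: entries field_simps)
qed

lemma coherence_le_populations:
  assumes "0 \<le> t"
  shows "(Re (\<rho> t $ 1 $ 2))\<^sup>2 + (Im (\<rho> t $ 1 $ 2))\<^sup>2 \<le> Re (\<rho> t $ 1 $ 1) * Re (\<rho> t $ 2 $ 2)"
proof -
  define A where "A = (\<lambda>s. Re (\<rho> s $ 1 $ 1))"
  define x where "x = (\<lambda>s. Re (\<rho> s $ 1 $ 2))"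
  define y where "y = (\<lambda>s. Im (\<rho> s $ 1 $ 2))"
  \<comment> \<open>\<open>\<Delta> = det \<rho>\<close>, as \<open>\<rho>\<close> is Hermitian of trace one\<close>
  define \<Delta> where "\<Delta> s = A s * (1 - A s) - (x s)\<^sup>2 - (y s)\<^sup>2" for s
  have "(\<Delta> has_real_derivative g s * ((A s)\<^sup>2 - \<Delta> s)) (at s within {0..})" if "0 \<le> s" for s
  proof -
    note d = bloch_equations[OF that, folded A_def x_def y_def]
    show ?thesis unfolding \<Delta>_def[abs_def]
      by (rule DERIV_cong[OF DERIV_diff[OF DERIV_diff[OF DERIV_mult[OF d(1) DERIV_diff[OF DERIV_const d(1)]]
            DERIV_power[OF d(2)]] DERIV_power[OF d(3)]]])
         (simp add: A_def x_def y_def field_simps power2_eq_square)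
  qed
  then have "0 \<le> \<Delta> t"
  proof (rule nonneg_if_deriv_nonneg_where_neg)
    show "0 \<le> \<Delta> 0" by (simp add: \<Delta>_def A_def x_def y_def rho_0_entries)
    fix s assume "0 < s" "\<Delta> s < 0"
    then have "0 \<le> (A s)\<^sup>2 - \<Delta> s" using zero_le_power2[of "A s"] by linarith
    then show "0 \<le> g s * ((A s)\<^sup>2 - \<Delta> s)"
      using decay_rate_nonneg[of s] \<open>0 < s\<close> by simp
  qed (use assms in auto)
  moreover have "Re (\<rho> t $ 2 $ 2) = 1 - A t"
    using arg_cong[OF trace_rho[OF assms], of Re] by (simp add: A_def)
  ultimately show ?thesis by (simp add: \<Delta>_def A_def x_def y_def)
qed

lemma has_real_derivative_excited_population:
  assumes "0 \<le> t"
  shows "((\<lambda>s. Re (\<rho> s $ 2 $ 2)) has_real_derivative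
           ex t * Im (\<rho> t $ 1 $ 2) + ey t * Re (\<rho> t $ 1 $ 2) + g t * (1 - Re (\<rho> t $ 2 $ 2)))
         (at t within {0..})"
proof -
  have "Re (\<rho> t $ 1 $ 1) = 1 - Re (\<rho> t $ 2 $ 2)"
    using arg_cong[OF trace_rho[OF assms], of Re] by simp
  moreover have "Re (\<rho> t $ 2 $ 1) = Re (\<rho> t $ 1 $ 2)" "Im (\<rho> t $ 2 $ 1) = - Im (\<rho> t $ 1 $ 2)"
    using rho_hermitian(2)[OF assms] by simp_all
  ultimately show ?thesis
    by (intro DERIV_cong[OF has_real_derivative_Re_rho[OF assms]])
       (simp only: lindblad_Re_Im, simp add: field_simps)
qed

lemma excited_population_rate_le:
  fixes \<epsilon> G p :: real
  assumes drive: "(ex s)\<^sup>2 + (ey s)\<^sup>2 \<le> \<epsilon>\<^sup>2" and rate: "g s \<le> G"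
    and "0 \<le> \<epsilon>" "p \<le> 1/2" "G * p \<le> \<epsilon> * sqrt (p - p\<^sup>2)"
    and "0 \<le> s" and below: "Re (\<rho> s $ 2 $ 2) \<le> p"
  shows "ex s * Im (\<rho> s $ 1 $ 2) + ey s * Re (\<rho> s $ 1 $ 2) + g s * (1 - Re (\<rho> s $ 2 $ 2))
           \<le> 2 * \<epsilon> * sqrt (p - p\<^sup>2) + G * (1 - p)"
proof -
  have "Re (\<rho> s $ 1 $ 1) = 1 - Re (\<rho> s $ 2 $ 2)"
    using arg_cong[OF trace_rho[OF \<open>0 \<le> s\<close>], of Re] by simp
  then have coherence: "(Re (\<rho> s $ 1 $ 2))\<^sup>2 + (Im (\<rho> s $ 1 $ 2))\<^sup>2
                          \<le> (1 - Re (\<rho> s $ 2 $ 2)) * Re (\<rho> s $ 2 $ 2)"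
    using coherence_le_populations[OF \<open>0 \<le> s\<close>] by simp
  then have "0 \<le> (1 - Re (\<rho> s $ 2 $ 2)) * Re (\<rho> s $ 2 $ 2)"
    using zero_le_power2[of "Re (\<rho> s $ 1 $ 2)"] zero_le_power2[of "Im (\<rho> s $ 1 $ 2)"] by linarith
  then have "0 \<le> Re (\<rho> s $ 2 $ 2)" using below \<open>p \<le> 1/2\<close> by (simp add: zero_le_mult_iff)
  then show ?thesis
    using excitation_rate_le[OF drive coherence _ below] decay_rate_nonneg[OF \<open>0 \<le> s\<close>] rate assms(3-5)
    by blast
qed

lemma excited_population_le:
  fixes \<epsilon> G p :: real
  assumes drive: "\<And>s. 0 \<le> s \<Longrightarrow> (ex s)\<^sup>2 + (ey s)\<^sup>2 \<le> \<epsilon>\<^sup>2"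
    and rate: "\<And>s. 0 \<le> s \<Longrightarrow> g s \<le> G"
    and "0 < \<epsilon>" "0 < p" "p \<le> 1/2" and G_p: "G * p \<le> \<epsilon> * sqrt (p - p\<^sup>2)"
    and "0 \<le> t" "t \<le> p / (2 * \<epsilon> * sqrt (p - p\<^sup>2) + G * (1 - p))"
  shows "Re (\<rho> t $ 2 $ 2) \<le> p"
proof (rule le_level_before_time_if_rate_le[where P = "\<lambda>s. Re (\<rho> s $ 2 $ 2)"])
  have "0 < p - p\<^sup>2"
    using \<open>0 < p\<close> \<open>p \<le> 1/2\<close> mult_pos_pos[of p "1 - p"] by (simp add: power2_eq_square algebra_simps)
  moreover have "0 \<le> G" using rate[of 0] decay_rate_nonneg[of 0] by simp
  ultimately show "0 < 2 * \<epsilon> * sqrt (p - p\<^sup>2) + G * (1 - p)"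
    using \<open>0 < \<epsilon>\<close> \<open>p \<le> 1/2\<close> by (simp add: add_pos_nonneg)
  show "ex s * Im (\<rho> s $ 1 $ 2) + ey s * Re (\<rho> s $ 1 $ 2) + g s * (1 - Re (\<rho> s $ 2 $ 2))
          \<le> 2 * \<epsilon> * sqrt (p - p\<^sup>2) + G * (1 - p)"
    if "0 \<le> s" "Re (\<rho> s $ 2 $ 2) \<le> p" for s
    using excited_population_rate_le[OF drive rate] that assms(3,5,6) by simp
qed (use has_real_derivative_excited_population rho_0_entries assms in auto)

end

theorem corollary1:
  fixes p0 \<epsilon> \<omega> \<gamma>0 \<gamma> :: real
    and \<omega>t \<epsilon>x \<epsilon>y \<delta>\<gamma> :: "real \<Rightarrow> real"
    and \<rho> :: "real \<Rightarrow> complex^2^2"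
  assumes "0 < p0" "p0 < 1" "0 < \<epsilon>" "0 \<le> \<omega>" "0 \<le> \<gamma>" "\<gamma> \<le> \<gamma>0"
    and "p0 \<le> 1/2 - (\<gamma>0 + \<gamma>) / (2 * sqrt (4 * \<epsilon>^2 + (\<gamma>0 + \<gamma>)^2))"
    and "\<And>t. t \<ge> 0 \<Longrightarrow> \<bar>\<omega>t t\<bar> \<le> \<omega>"
    and "\<And>t. t \<ge> 0 \<Longrightarrow> sqrt ((\<epsilon>x t)^2 + (\<epsilon>y t)^2) \<le> \<epsilon>"
    and "\<And>t. t \<ge> 0 \<Longrightarrow> \<bar>\<delta>\<gamma> t\<bar> \<le> \<gamma>"
    and "\<And>t. t \<ge> 0 \<Longrightarrow>
           (\<rho> has_vector_derivative
              lindblad ((1 + \<omega>t t) *\<^sub>R I_z + \<epsilon>x t *\<^sub>R I_x + \<epsilon>y t *\<^sub>R I_y)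
                       (\<gamma>0 + \<delta>\<gamma> t) (\<rho> t)) (at t within {0..})"
    and "\<rho> 0 = outer ket0 ket0"
  shows "\<forall>t \<in> {0 .. 2 * p0 / (4 * \<epsilon> * sqrt (p0 - p0^2) + 2 * (\<gamma>0 + \<gamma>) * (1 - p0))}.
           braket ket0 (\<rho> t) ket0 \<in> \<real> \<and> 1 - p0 \<le> Re (braket ket0 (\<rho> t) ket0)
         \<and> Re (braket ket1 (\<rho> t) ket1) \<le> p0"
proof -
  interpret driven_decaying_qubit "\<lambda>t. 1 + \<omega>t t" \<epsilon>x \<epsilon>y "\<lambda>t. \<gamma>0 + \<delta>\<gamma> t" \<rho>
  proof
    show "0 \<le> \<gamma>0 + \<delta>\<gamma> t" if "0 \<le> t" for t
      using assms(6) assms(10)[OF that] by linarith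
  qed (use assms(11,12) in simp_all)
  define G where "G = \<gamma>0 + \<gamma>"
  have "0 \<le> G" using assms(5,6) by (simp add: G_def)
  note threshold = threshold_bounds[OF assms(1-3) \<open>0 \<le> G\<close> assms(7)[folded G_def]]
  have drive: "(\<epsilon>x s)\<^sup>2 + (\<epsilon>y s)\<^sup>2 \<le> \<epsilon>\<^sup>2" if "0 \<le> s" for s
    using power_mono[OF assms(9)[OF that], of 2] by simp
  have rate: "\<gamma>0 + \<delta>\<gamma> s \<le> G" if "0 \<le> s" for s
    using assms(10)[OF that] by (simp add: G_def)
  have T: "2 * p0 / (4 * \<epsilon> * sqrt (p0 - p0\<^sup>2) + 2 * (\<gamma>0 + \<gamma>) * (1 - p0))
           = p0 / (2 * \<epsilon> * sqrt (p0 - p0\<^sup>2) + G * (1 - p0))"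
    unfolding G_def by (subst mult_divide_mult_cancel_left[of 2, symmetric]) (simp_all add: algebra_simps)
  show ?thesis
  proof
    fix t assume "t \<in> {0 .. 2 * p0 / (4 * \<epsilon> * sqrt (p0 - p0\<^sup>2) + 2 * (\<gamma>0 + \<gamma>) * (1 - p0))}"
    then have t: "0 \<le> t" "t \<le> p0 / (2 * \<epsilon> * sqrt (p0 - p0\<^sup>2) + G * (1 - p0))"
      unfolding T by simp_all
    have "Re (\<rho> t $ 2 $ 2) \<le> p0"
      using excited_population_le[OF drive rate assms(3,1) threshold t] .
    moreover have "\<rho> t $ 1 $ 1 = 1 - \<rho> t $ 2 $ 2"
      using trace_rho[OF t(1)] by (simp add: algebra_simps)
    ultimately show "braket ket0 (\<rho> t) ket0 \<in> \<real> \<and> 1 - p0 \<le> Re (braket ket0 (\<rho> t) ket0)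
         \<and> Re (braket ket1 (\<rho> t) ket1) \<le> p0"
      using rho_hermitian(1)[OF t(1)] by (simp add: ket_diag_eq complex_is_Real_iff)
  qed
qed

end
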